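(* Let $W(x_1,\dots,x_n)$ be an invertible, non-degenerate, quasi-homogeneous polynomial with $2\sum_jw_j=d$ and $W^\star$ its transpose. For every group $G$ with $J_W^2\in G\subseteq\operatorname{SL}_W$ we have $J_{W^\star}^2\in G^\star\subseteq\operatorname{SL}_{W^\star}$. Furthermore $(G^\star)^\star=G$, $\langle J_W^2\rangle^\star=\operatorname{SL}_{W^\star}$, $(\operatorname{SL}_W)^\star=\langle J_{W^\star}^2\rangle$, and if $H_1\subseteq H_2$ are groups with $J_W^2\in H_i\subseteq\operatorname{SL}_W$, then $H_2^\star\subseteq H_1^\star$.
   Context: Invertible: $W=\sum_i\prod_jx_j^{m_{i,j}}$ with invertible exponent matrix $M$, inverse $(m^{i,j})$; quasi-homogeneous of weights $w_j$ and degree $d$; non-degenerate: only critical point $0$. $W^\star=\sum_i\prod_jx_j^{m_{j,i}}$. $\operatorname{Aut}_W$ is the finite group of diagonal symmetries of $W$, $\operatorname{SL}_W=\operatorname{Aut}_W\cap\operatorname{SL}(n;\mathbb C)$, $J_W=(e^{2\pi iw_1/d},\dots,e^{2\pi iw_n/d})$ (similarly for $W^\star$); $\langle h\rangle$ is the group generated by $h$, and $G[J_W]$ the group generated by $G$ and $J_W$. With $\bar\rho_k=(e^{2\pi im^{k,1}},\dots,e^{2\pi im^{k,n}})\in\operatorname{Aut}_{W^\star}$, the Berglund--Hübsch dual of $H\subseteq\operatorname{Aut}_W$ is $H^{\mathrm T}=\{\prod_k\bar\rho_k^{r_k}:\prod_kx_k^{r_k}\text{ is }H\text{-invariant}\}$,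 i.e. the kernel of the Cartier dual $\operatorname{Aut}_{W^\star}=\widehat{\operatorname{Aut}_W}\to\widehat H$ of the inclusion. For $J_W^2\in G\subseteq\operatorname{SL}_W$ set $G^\star:=(G[J_W])^{\mathrm T}$; symmetrically for groups of $W^\star$, with $(W^\star)^\star=W$. *)

theory Defs
  imports "HOL-Analysis.Analysis"
begin

text \<open>An invertible polynomial W = sum_i prod_j x_j^(M i j) is encoded by its square
 exponent matrix M, indexed by a finite type 'n (rows = monomials, columns = variables).
 Diagonal symmetries are vectors 'n \<Rightarrow> complex acting by x_j \<mapsto> g_j x_j.\<close>

definition Wpoly :: "('n::finite \<Rightarrow> 'n \<Rightarrow> nat) \<Rightarrow> ('n \<Rightarrow> complex) \<Rightarrow> complex" where
  "Wpoly M x = (\<Sum>i\<in>UNIV. \<Prod>j\<in>UNIV. x j ^ M i j)"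

text \<open>Transpose polynomial W^star has exponent matrix the transpose of M.\<close>
definition Mtr :: "('n::finite \<Rightarrow> 'n \<Rightarrow> nat) \<Rightarrow> ('n \<Rightarrow> 'n \<Rightarrow> nat)" where
  "Mtr M = (\<lambda>i j. M j i)"

definition matR :: "('n::finite \<Rightarrow> 'n \<Rightarrow> nat) \<Rightarrow> real^'n^'n" where
  "matR M = (\<chi> i j. real (M i j))"

definition invertible_poly :: "('n::finite \<Rightarrow> 'n \<Rightarrow> nat) \<Rightarrow> bool" where
  "invertible_poly M \<longleftrightarrow> invertible (matR M)"

definition minv :: "('n::finite \<Rightarrow> 'n \<Rightarrow> nat) \<Rightarrow> 'n \<Rightarrow> 'n \<Rightarrow> real" where
  "minv M i j = matrix_inv (matR M) $ i $ j"

definition quasi_hom :: "('n::finite \<Rightarrow> 'n \<Rightarrow> nat) \<Rightarrow> ('n \<Rightarrow> nat) \<Rightarrow> nat \<Rightarrow> bool" where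
  "quasi_hom M w d \<longleftrightarrow> d > 0 \<and> (\<forall>j. w j > 0) \<and> (\<forall>i. (\<Sum>j\<in>UNIV. M i j * w j) = d)"

definition dW :: "('n::finite \<Rightarrow> 'n \<Rightarrow> nat) \<Rightarrow> 'n \<Rightarrow> ('n \<Rightarrow> complex) \<Rightarrow> complex" where
  "dW M k x = deriv (\<lambda>z. Wpoly M (x(k := z))) (x k)"

definition nondegenerate :: "('n::finite \<Rightarrow> 'n \<Rightarrow> nat) \<Rightarrow> bool" where
  "nondegenerate M \<longleftrightarrow> (\<forall>x. (\<forall>k. dW M k x = 0) \<longrightarrow> x = (\<lambda>_. 0))"

text \<open>Normalised weights q_j = w_j/d (unique by invertibility) and the exponential
 grading element J_W = (exp(2 pi i w_j/d))_j.\<close>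
definition qweight :: "('n::finite \<Rightarrow> 'n \<Rightarrow> nat) \<Rightarrow> 'n \<Rightarrow> real" where
  "qweight M = (THE q. \<forall>i. (\<Sum>j\<in>UNIV. real (M i j) * q j) = 1)"

definition Jgrad :: "('n::finite \<Rightarrow> 'n \<Rightarrow> nat) \<Rightarrow> 'n \<Rightarrow> complex" where
  "Jgrad M = (\<lambda>j. cis (2 * pi * qweight M j))"

definition sq :: "('n \<Rightarrow> complex) \<Rightarrow> 'n \<Rightarrow> complex" where
  "sq g = (\<lambda>j. g j ^ 2)"

definition Aut :: "('n::finite \<Rightarrow> 'n \<Rightarrow> nat) \<Rightarrow> ('n \<Rightarrow> complex) set" where
  "Aut M = {g. (\<forall>j. g j \<noteq> 0) \<and> (\<forall>x. Wpoly M (\<lambda>j. g j * x j) = Wpoly M x)}"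

definition SL :: "('n::finite \<Rightarrow> 'n \<Rightarrow> nat) \<Rightarrow> ('n \<Rightarrow> complex) set" where
  "SL M = {g \<in> Aut M. (\<Prod>j\<in>UNIV. g j) = 1}"

definition is_subgroup :: "('n \<Rightarrow> complex) set \<Rightarrow> bool" where
  "is_subgroup H \<longleftrightarrow> (\<lambda>_. 1) \<in> H \<and> (\<forall>a\<in>H. \<forall>b\<in>H. (\<lambda>j. a j * b j) \<in> H)
     \<and> (\<forall>a\<in>H. (\<lambda>j. inverse (a j)) \<in> H)"

definition genby :: "('n \<Rightarrow> complex) set \<Rightarrow> ('n \<Rightarrow> complex) set" where
  "genby S = \<Inter>{H. is_subgroup H \<and> S \<subseteq> H}"

definition rhobar :: "('n::finite \<Rightarrow> 'n \<Rightarrow> nat) \<Rightarrow> 'n \<Rightarrow> 'n \<Rightarrow> complex" where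
  "rhobar M k = (\<lambda>j. cis (2 * pi * minv M k j))"

definition BHdual :: "('n::finite \<Rightarrow> 'n \<Rightarrow> nat) \<Rightarrow> ('n \<Rightarrow> complex) set \<Rightarrow> ('n \<Rightarrow> complex) set" where
  "BHdual M H = {g. \<exists>r::'n \<Rightarrow> nat. (\<forall>h\<in>H. (\<Prod>k\<in>UNIV. h k ^ r k) = 1)
      \<and> g = (\<lambda>j. \<Prod>k\<in>UNIV. rhobar M k j ^ r k)}"

definition star :: "('n::finite \<Rightarrow> 'n \<Rightarrow> nat) \<Rightarrow> ('n \<Rightarrow> complex) set \<Rightarrow> ('n \<Rightarrow> complex) set" where
  "star M G = BHdual M (genby (insert (Jgrad M) G))"

end

theory Submission
  imports Defs
begin

(*
  Invertibility of the exponent matrix M identifies Aut_W with the finite group of the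
  products \<rho>^s = \<Prod>_k \<rho>_k^(s_k), and the pairing exp(2\<pi>i r^T M^(-1) s) is symmetric:
  the monomial x^r is invariant under \<rho>^s iff x^s is invariant under rhobar^r. A finite group
  K of diagonal matrices is determined by its invariant monomials, since an interpolating
  polynomial averaged over K separates K from any other element; hence
  (G^\<star>)^\<star> = G[J_W] \<inter> SL_W. The Calabi--Yau condition \<Sum>_j q_j = 1/2 gives
  det J_W = det J_{W^\<star>} = -1, so G[J_W] = G \<union> J_W G meets SL_W exactly in G. Since the
  determinant of rhobar^r is the value of x^r at J_W, the duals lie in SL_{W^\<star>}, the dual of
  \<langle>J_W^2\<rangle> is all of SL_{W^\<star>}, and the dual of SL_W follows from the double-dual
  identity on the side of W^\<star>.
*)

definition mpow :: "('n::finite \<Rightarrow> complex) \<Rightarrow> ('n \<Rightarrow> nat) \<Rightarrow> complex" where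
  "mpow x e = (\<Prod>j\<in>UNIV. x j ^ e j)"

definition vmul :: "('n \<Rightarrow> complex) \<Rightarrow> ('n \<Rightarrow> complex) \<Rightarrow> 'n \<Rightarrow> complex" where
  "vmul a b = (\<lambda>j. a j * b j)"

definition diag_det :: "('n::finite \<Rightarrow> complex) \<Rightarrow> complex" where
  "diag_det g = (\<Prod>j\<in>UNIV. g j)"

section \<open>Monomials and roots of unity\<close>

lemma mpow_vmul: "mpow (vmul a b) e = mpow a e * mpow b e"
  by (simp add: mpow_def vmul_def power_mult_distrib prod.distrib)

lemma mpow_add: "mpow a (\<lambda>j. e j + f j) = mpow a e * mpow a f"
  by (simp add: mpow_def power_add prod.distrib)

lemma mpow_inverse: "mpow (\<lambda>j. inverse (a j)) e = inverse (mpow a e)"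
  using prod_inversef[of "\<lambda>j. a j ^ e j" UNIV] by (simp add: mpow_def power_inverse o_def)

lemma mpow_one [simp]: "mpow (\<lambda>_. 1) e = 1"
  by (simp add: mpow_def)

lemma mpow_zero [simp]: "mpow a (\<lambda>_. 0) = 1"
  by (simp add: mpow_def)

lemma mpow_sq: "mpow (sq h) r = (mpow h r)\<^sup>2"
  by (simp add: mpow_def sq_def prod_power_distrib flip: power_mult) (simp add: mult.commute)

lemma mpow_const_one: "mpow h (\<lambda>_. 1) = diag_det h"
  by (simp add: mpow_def diag_det_def)

lemma mpow_const_two: "mpow h (\<lambda>_. 2) = (diag_det h)\<^sup>2"
  by (simp add: mpow_def diag_det_def prod_power_distrib)

lemma mpow_unit_vector: "mpow x (\<lambda>k. if k = j then 1 else 0) = x j"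
proof -
  have "mpow x (\<lambda>k. if k = j then 1 else 0) = (\<Prod>k\<in>UNIV. if k = j then x k else 1)"
    unfolding mpow_def by (rule prod.cong) auto
  then show ?thesis by simp
qed

lemma diag_det_vmul: "diag_det (vmul a b) = diag_det a * diag_det b"
  by (simp add: diag_det_def vmul_def prod.distrib)

lemma Wpoly_eq_sum_mpow: "Wpoly M x = (\<Sum>i\<in>UNIV. mpow x (M i))"
  by (simp add: Wpoly_def mpow_def)

lemma inj_vmul: "\<forall>j. a j \<noteq> 0 \<Longrightarrow> inj (vmul a)"
  by (auto intro!: injI simp: vmul_def fun_eq_iff)

lemma sum_mpow_eq_0:
  assumes "finite K" "\<forall>j. h0 j \<noteq> 0" "\<forall>h\<in>K. vmul h0 h \<in> K" "mpow h0 e \<noteq> 1"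
  shows "(\<Sum>h\<in>K. mpow h e) = 0"
proof -
  have inj: "inj_on (vmul h0) K"
    using inj_vmul[OF assms(2)] by (rule inj_on_subset) simp
  have "vmul h0 ` K = K"
    using assms(1,3) inj by (intro endo_inj_surj) auto
  then have "(\<Sum>h\<in>K. mpow h e) = (\<Sum>h\<in>K. mpow (vmul h0 h) e)"
    using sum.reindex[OF inj, of "\<lambda>h. mpow h e"] by simp
  also have "\<dots> = mpow h0 e * (\<Sum>h\<in>K. mpow h e)"
    by (simp add: mpow_vmul sum_distrib_left)
  finally have "(1 - mpow h0 e) * (\<Sum>h\<in>K. mpow h e) = 0"
    by (simp add: left_diff_distrib)
  then show ?thesis using assms(4) by simp
qed

lemma prod_cis: "(\<Prod>j\<in>A. cis (f j)) = cis (\<Sum>j\<in>A. f j)"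
  by (induction A rule: infinite_finite_induct) (auto simp: cis_mult)

lemma cis_2pi_add_int: "cis (2 * pi * (x + of_int n)) = cis (2 * pi * x)"
  by (simp add: distrib_left flip: cis_mult)

lemma cis_eq_1_iff: "cis x = 1 \<longleftrightarrow> (\<exists>n::int. x = 2 * pi * of_int n)"
proof
  assume "cis x = 1"
  then have "exp (\<i> * complex_of_real x) = 1" by (simp add: cis_conv_exp)
  then obtain n :: int where "x = of_int (2 * n) * pi" by (auto simp: exp_eq_1)
  then show "\<exists>n::int. x = 2 * pi * of_int n" by (intro exI[of _ n]) simp
qed auto

lemma cis_root_power_eq_1_iff:
  assumes "L > 0"
  shows "cis (2 * pi / real L) ^ k = 1 \<longleftrightarrow> L dvd k"
proof -
  have "cis (2 * pi / real L) ^ k = cis (2 * pi * (real k / real L))"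
    by (simp add: Complex.DeMoivre field_simps)
  then have "cis (2 * pi / real L) ^ k = 1 \<longleftrightarrow> (\<exists>n::int. real k / real L = of_int n)"
    by (simp add: cis_eq_1_iff del: times_divide_eq_right)
  also have "\<dots> \<longleftrightarrow> (\<exists>n::int. int k = n * int L)"
    using assms by (simp add: divide_eq_eq) (metis of_int_eq_iff of_int_mult of_int_of_nat_eq)
  also have "\<dots> \<longleftrightarrow> L dvd k"
    by (metis dvd_def int_dvd_int_iff mult.commute)
  finally show ?thesis .
qed

lemma finite_root_of_unity_vectors:
  "L > 0 \<Longrightarrow> finite {\<zeta>::'n::finite \<Rightarrow> complex. \<forall>j. \<zeta> j ^ L = 1}"
  using finite_PiE[of "UNIV :: 'n set" "\<lambda>_. {z::complex. z ^ L = 1}"] finite_roots_unity[of L]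
  by (simp add: PiE_UNIV_domain Pi_def)

lemma sum_root_of_unity_vectors_mpow:
  assumes L: "L > 0"
  defines "U \<equiv> {\<zeta>::'n::finite \<Rightarrow> complex. \<forall>j. \<zeta> j ^ L = 1}"
  shows "(\<Sum>\<zeta>\<in>U. mpow \<zeta> e) = (if \<forall>j. L dvd e j then of_nat (card U) else 0)"
proof (cases "\<forall>j. L dvd e j")
  case True
  have "\<zeta> j ^ e j = 1" if "\<zeta> \<in> U" for \<zeta> j
  proof -
    obtain q where "e j = L * q" using True by blast
    then show ?thesis using that by (simp add: U_def power_mult)
  qed
  then have "mpow \<zeta> e = 1" if "\<zeta> \<in> U" for \<zeta>
    using that by (simp add: mpow_def)
  then show ?thesis using True by simp
next
  case False
  then obtain j where j: "\<not> L dvd e j" by blast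
  define \<omega> where "\<omega> = cis (2 * pi / real L)"
  define h0 where "h0 = (\<lambda>k. if k = j then \<omega> else 1)"
  have "\<omega> ^ L = 1" unfolding \<omega>_def using cis_root_power_eq_1_iff[OF L] by simp
  then have h0U: "\<forall>h\<in>U. vmul h0 h \<in> U"
    unfolding U_def vmul_def h0_def by (simp add: power_mult_distrib)
  have h0nz: "\<forall>k. h0 k \<noteq> 0" by (simp add: h0_def \<omega>_def)
  have "mpow h0 e = \<omega> ^ e j"
    unfolding mpow_def h0_def by (simp add: if_distrib[of "\<lambda>x. x ^ _"] cong: if_cong)
  then have "mpow h0 e \<noteq> 1"
    using j by (simp add: \<omega>_def cis_root_power_eq_1_iff[OF L])
  then have "(\<Sum>\<zeta>\<in>U. mpow \<zeta> e) = 0"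
    using sum_mpow_eq_0[OF _ h0nz h0U] finite_root_of_unity_vectors[OF L] by (simp add: U_def)
  with False show ?thesis by presburger
qed

text \<open>Averaging \<open>x^f\<close> times the linear combination, with \<open>f = (L, \<dots>, L) - E i0\<close>, over
  the group of vectors of \<open>L\<close>-th roots of unity kills every term but the \<open>i0\<close>-th.\<close>
lemma mpow_linear_independent:
  fixes E :: "'m::finite \<Rightarrow> ('n::finite \<Rightarrow> nat)" and c :: "'m \<Rightarrow> complex"
  assumes inj: "inj E" and zero: "\<And>x. (\<Sum>i\<in>UNIV. c i * mpow x (E i)) = 0"
  shows "c i0 = 0"
proof -
  define L where "L = Suc (\<Sum>i\<in>UNIV. \<Sum>j\<in>UNIV. E i j)"
  have EL: "E i j < L" for i j
  proof -
    have "E i j \<le> (\<Sum>j\<in>UNIV. E i j)" by (rule member_le_sum) auto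
    also have "\<dots> \<le> (\<Sum>i\<in>UNIV. \<Sum>j\<in>UNIV. E i j)"
      by (rule member_le_sum[where f = "\<lambda>i. \<Sum>j\<in>UNIV. E i j"]) auto
    finally show ?thesis unfolding L_def by simp
  qed
  have L: "L > 0" unfolding L_def by simp
  define U where "U = {\<zeta>::'n \<Rightarrow> complex. \<forall>j. \<zeta> j ^ L = 1}"
  have finU: "finite U" unfolding U_def by (rule finite_root_of_unity_vectors[OF L])
  have "(\<lambda>_. 1) \<in> U" unfolding U_def by simp
  then have cardU: "card U \<noteq> 0" using finU by auto
  define f where "f = (\<lambda>j. L - E i0 j)"
  have dvd_iff: "(\<forall>j. L dvd E i j + f j) \<longleftrightarrow> i = i0" for i
  proof
    assume dvd: "\<forall>j. L dvd E i j + f j"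
    have "E i j = E i0 j" for j
    proof -
      obtain q where q: "E i j + f j = L * q" using dvd by blast
      have "0 < E i j + f j" "E i j + f j < 2 * L"
        using EL[of i j] EL[of i0 j] unfolding f_def by auto
      with q have "q = 1" by (cases q) (auto simp: nat_mult_less_cancel1)
      with q show ?thesis using EL[of i0 j] unfolding f_def by simp
    qed
    then have "E i = E i0" ..
    then show "i = i0" using inj by (simp add: inj_eq)
  qed (use EL in \<open>simp add: f_def less_imp_le\<close>)
  have avg: "(\<Sum>\<zeta>\<in>U. mpow \<zeta> (\<lambda>j. E i j + f j)) = (if i = i0 then of_nat (card U) else 0)" for i
    using sum_root_of_unity_vectors_mpow[OF L, of "\<lambda>j. E i j + f j"] dvd_iff[of i]
    unfolding U_def by simp
  have "0 = (\<Sum>\<zeta>\<in>U. (\<Sum>i\<in>UNIV. c i * mpow \<zeta> (E i)) * mpow \<zeta> f)"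
    using zero by simp
  also have "\<dots> = (\<Sum>i\<in>UNIV. c i * (\<Sum>\<zeta>\<in>U. mpow \<zeta> (\<lambda>j. E i j + f j)))"
    by (simp add: sum_distrib_right sum_distrib_left mpow_add mult.assoc sum.swap[of _ U])
  also have "\<dots> = c i0 * of_nat (card U)"
    by (simp add: avg if_distrib cong: if_cong)
  finally show ?thesis using cardU by simp
qed

section \<open>The inverse exponent matrix\<close>

lemma sum_M_minv:
  assumes "invertible_poly M"
  shows "(\<Sum>j\<in>UNIV. real (M i j) * minv M j k) = (if i = k then 1 else 0)"
    and "(\<Sum>j\<in>UNIV. minv M i j * real (M j k)) = (if i = k then 1 else 0)"
proof -
  obtain B where "matR M ** B = mat 1 \<and> B ** matR M = mat 1"
    using assms unfolding invertible_poly_def invertible_def by blast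
  then have inv: "matR M ** matrix_inv (matR M) = mat 1 \<and> matrix_inv (matR M) ** matR M = mat 1"
    unfolding matrix_inv_def by (rule someI)
  from inv have "(matR M ** matrix_inv (matR M)) $ i $ k = mat 1 $ i $ k" by simp
  then show "(\<Sum>j\<in>UNIV. real (M i j) * minv M j k) = (if i = k then 1 else 0)"
    by (simp add: matrix_matrix_mult_def matR_def minv_def mat_def)
  from inv have "(matrix_inv (matR M) ** matR M) $ i $ k = mat 1 $ i $ k" by simp
  then show "(\<Sum>j\<in>UNIV. minv M i j * real (M j k)) = (if i = k then 1 else 0)"
    by (simp add: matrix_matrix_mult_def matR_def minv_def mat_def)
qed

lemma sum_M_minv_apply:
  assumes "invertible_poly M"
  shows "(\<Sum>j\<in>UNIV. real (M i j) * (\<Sum>k\<in>UNIV. minv M j k * x k)) = x i"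
proof -
  have "(\<Sum>j\<in>UNIV. real (M i j) * (\<Sum>k\<in>UNIV. minv M j k * x k))
      = (\<Sum>j\<in>UNIV. \<Sum>k\<in>UNIV. real (M i j) * minv M j k * x k)"
    by (simp add: sum_distrib_left mult.assoc)
  also have "\<dots> = (\<Sum>k\<in>UNIV. (\<Sum>j\<in>UNIV. real (M i j) * minv M j k) * x k)"
    by (subst sum.swap) (simp add: sum_distrib_right)
  also have "\<dots> = x i"
    by (simp add: sum_M_minv(1)[OF assms] flip: of_bool_def)
  finally show ?thesis .
qed

lemma sum_minv_M_apply:
  assumes "invertible_poly M"
  shows "(\<Sum>i\<in>UNIV. minv M j i * (\<Sum>l\<in>UNIV. real (M i l) * x l)) = x j"
proof -
  have "(\<Sum>i\<in>UNIV. minv M j i * (\<Sum>l\<in>UNIV. real (M i l) * x l))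
      = (\<Sum>i\<in>UNIV. \<Sum>l\<in>UNIV. minv M j i * real (M i l) * x l)"
    by (simp add: sum_distrib_left mult.assoc)
  also have "\<dots> = (\<Sum>l\<in>UNIV. (\<Sum>i\<in>UNIV. minv M j i * real (M i l)) * x l)"
    by (subst sum.swap) (simp add: sum_distrib_right)
  also have "\<dots> = x j"
    by (simp add: sum_M_minv(2)[OF assms] flip: of_bool_def)
  finally show ?thesis .
qed

lemma minv_solve:
  assumes "invertible_poly M" "\<And>i. (\<Sum>j\<in>UNIV. real (M i j) * x j) = y i"
  shows "x j = (\<Sum>i\<in>UNIV. minv M j i * y i)"
  using sum_minv_M_apply[OF assms(1), of j x] assms(2) by simp

lemma Mtr_Mtr [simp]: "Mtr (Mtr M) = M"
  by (simp add: Mtr_def)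

lemma invertible_Mtr:
  assumes "invertible_poly M"
  shows "invertible_poly (Mtr M)"
proof -
  have "matR (Mtr M) = transpose (matR M)"
    by (simp add: vec_eq_iff matR_def Mtr_def transpose_def)
  then show ?thesis
    using assms transpose_invertible by (simp add: invertible_poly_def)
qed

lemma minv_Mtr:
  assumes "invertible_poly M"
  shows "minv (Mtr M) j k = minv M k j"
proof -
  have "minv M k j = (\<Sum>i\<in>UNIV. minv (Mtr M) j i * (if k = i then 1 else 0))"
    using sum_M_minv(2)[OF assms, of k]
    by (intro minv_solve[OF invertible_Mtr[OF assms]]) (simp add: Mtr_def mult.commute)
  then show ?thesis by (simp add: flip: of_bool_def)
qed

lemma rowsum_pos:
  assumes "invertible_poly M"
  shows "(\<Sum>j\<in>UNIV. M i j) > 0"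
proof (rule ccontr)
  assume "\<not> ?thesis"
  then have "\<forall>j. M i j = 0" by simp
  then show False using sum_M_minv(1)[OF assms, of i i] by simp
qed

lemma colsum_pos:
  assumes "invertible_poly M"
  shows "(\<Sum>i\<in>UNIV. M i k) > 0"
  using rowsum_pos[OF invertible_Mtr[OF assms], of k] by (simp add: Mtr_def)

lemma inj_rows:
  assumes "invertible_poly M"
  shows "inj M"
proof (rule injI)
  fix i i' assume "M i = M i'"
  then have "(\<Sum>j\<in>UNIV. real (M i j) * minv M j i) = (\<Sum>j\<in>UNIV. real (M i' j) * minv M j i)"
    by simp
  then show "i = i'" using sum_M_minv(1)[OF assms] by (simp split: if_splits)
qed

section \<open>The symmetry group \<open>Aut\<^sub>W\<close>\<close>

text \<open>\<open>rho_prod M s\<close> is \<open>\<Prod>\<^sub>k \<rho>\<^sub>k ^ s k\<close> for the generators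
  \<open>\<rho>\<^sub>k = (exp (2\<pi>i m^{j,k}))\<^sub>j\<close> of \<open>Aut\<^sub>W\<close>.\<close>
definition rho_prod :: "('n::finite \<Rightarrow> 'n \<Rightarrow> nat) \<Rightarrow> ('n \<Rightarrow> nat) \<Rightarrow> 'n \<Rightarrow> complex" where
  "rho_prod M s = (\<lambda>j. cis (2 * pi * (\<Sum>k\<in>UNIV. minv M j k * real (s k))))"

lemma mpow_rho_prod:
  "mpow (rho_prod M s) r = cis (2 * pi * (\<Sum>j\<in>UNIV. real (r j) * (\<Sum>k\<in>UNIV. minv M j k * real (s k))))"
proof -
  have "mpow (rho_prod M s) r
      = cis (\<Sum>j\<in>UNIV. real (r j) * (2 * pi * (\<Sum>k\<in>UNIV. minv M j k * real (s k))))"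
    by (simp add: mpow_def rho_prod_def Complex.DeMoivre prod_cis)
  then show ?thesis
    by (simp add: sum_distrib_left mult.left_commute)
qed

lemma Aut_iff_mpow_rows:
  assumes "invertible_poly M"
  shows "g \<in> Aut M \<longleftrightarrow> (\<forall>j. g j \<noteq> 0) \<and> (\<forall>i. mpow g (M i) = 1)"
proof
  assume g: "g \<in> Aut M"
  have "(\<Sum>i\<in>UNIV. (mpow g (M i) - 1) * mpow x (M i)) = 0" for x
  proof -
    have "Wpoly M (vmul g x) = Wpoly M x" using g by (simp add: Aut_def vmul_def)
    then show ?thesis
      by (simp add: Wpoly_eq_sum_mpow mpow_vmul left_diff_distrib sum_subtractf)
  qed
  then have "mpow g (M i) = 1" for i
    using mpow_linear_independent[OF inj_rows[OF assms]] by fastforce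
  then show "(\<forall>j. g j \<noteq> 0) \<and> (\<forall>i. mpow g (M i) = 1)"
    using g by (simp add: Aut_def)
next
  assume "(\<forall>j. g j \<noteq> 0) \<and> (\<forall>i. mpow g (M i) = 1)"
  then show "g \<in> Aut M"
    by (simp add: Aut_def Wpoly_eq_sum_mpow mpow_vmul[unfolded vmul_def])
qed

lemma rho_prod_nonzero: "rho_prod M s j \<noteq> 0"
  by (simp add: rho_prod_def)

lemma rho_prod_in_Aut:
  assumes "invertible_poly M"
  shows "rho_prod M s \<in> Aut M"
  by (simp add: Aut_iff_mpow_rows[OF assms] rho_prod_nonzero mpow_rho_prod sum_M_minv_apply[OF assms])

text \<open>Taking logarithms, the conditions \<open>mpow g (M i) = 1\<close> become the linear system
  \<open>M (log g) \<in> 2\<pi>i \<int>^n\<close>.\<close>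
lemma exists_int_phases:
  assumes inv: "invertible_poly M" and nz: "\<forall>j. g j \<noteq> 0" and rows: "\<forall>i. mpow g (M i) = 1"
  shows "\<exists>a::'n::finite \<Rightarrow> int. g = (\<lambda>j. cis (2 * pi * (\<Sum>i\<in>UNIV. minv M j i * of_int (a i))))"
proof -
  define z where "z j = Ln (g j)" for j
  have gz: "g j = exp (z j)" for j using nz by (simp add: z_def exp_Ln)
  have "exp (\<Sum>j\<in>UNIV. of_nat (M i j) * z j) = 1" for i
    using rows by (simp add: exp_sum exp_of_nat_mult mpow_def gz)
  then have "\<forall>i. \<exists>n::int. (\<Sum>j\<in>UNIV. real (M i j) * Re (z j)) = 0
               \<and> (\<Sum>j\<in>UNIV. real (M i j) * Im (z j)) = 2 * pi * of_int n"
    by (auto simp: exp_eq_1 mult.commute mult.left_commute)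
  then obtain a :: "'n \<Rightarrow> int"
    where re: "\<And>i. (\<Sum>j\<in>UNIV. real (M i j) * Re (z j)) = 0"
      and im: "\<And>i. (\<Sum>j\<in>UNIV. real (M i j) * Im (z j)) = 2 * pi * of_int (a i)"
    by metis
  have "Re (z j) = 0" for j
    using minv_solve[OF inv re] by simp
  then have "z j = \<i> * complex_of_real (Im (z j))" for j
    by (simp add: complex_eq_iff)
  then have "g j = cis (Im (z j))" for j
    using gz by (metis cis_conv_exp)
  moreover have "Im (z j) = 2 * pi * (\<Sum>i\<in>UNIV. minv M j i * of_int (a i))" for j
    using minv_solve[OF inv im] by (simp add: sum_distrib_left algebra_simps)
  ultimately show ?thesis by auto
qed

text \<open>Adding \<open>T\<close> times the row sums of \<open>M\<close> to the integer exponent vector shifts every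
  phase by the integer \<open>T\<close>; for large \<open>T\<close> the exponents become nonnegative.\<close>
lemma int_phases_in_range_rho_prod:
  assumes inv: "invertible_poly M"
  shows "(\<lambda>j. cis (2 * pi * (\<Sum>i\<in>UNIV. minv M j i * of_int (a i)))) \<in> range (rho_prod M)"
proof -
  define T where "T = (\<Sum>i\<in>UNIV. \<bar>a i\<bar>)"
  define s where "s i = nat (a i + T * int (\<Sum>j\<in>UNIV. M i j))" for i
  have "\<bar>a i\<bar> \<le> T" for i unfolding T_def by (rule member_le_sum) auto
  moreover have "T * 1 \<le> T * int (\<Sum>j\<in>UNIV. M i j)" for i
  proof -
    have "1 \<le> int (\<Sum>j\<in>UNIV. M i j)" using rowsum_pos[OF inv, of i] by linarith
    moreover have "0 \<le> T" unfolding T_def by (simp add: sum_nonneg)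
    ultimately show ?thesis by (rule mult_left_mono)
  qed
  ultimately have "0 \<le> a k + T * int (\<Sum>j\<in>UNIV. M k j)" for k
    by (smt (verit))
  then have "real (s k) = of_int (a k + T * int (\<Sum>j\<in>UNIV. M k j))" for k
    unfolding s_def by simp
  then have s: "real (s k) = of_int (a k) + of_int T * (\<Sum>l\<in>UNIV. real (M k l) * 1)" for k
    by simp
  have "(\<Sum>k\<in>UNIV. minv M j k * real (s k)) = (\<Sum>k\<in>UNIV. minv M j k * of_int (a k)) + of_int T"
    for j
  proof -
    have "(\<Sum>k\<in>UNIV. minv M j k * real (s k))
        = (\<Sum>k\<in>UNIV. minv M j k * of_int (a k))
          + of_int T * (\<Sum>k\<in>UNIV. minv M j k * (\<Sum>l\<in>UNIV. real (M k l) * 1))"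
      by (simp add: s algebra_simps sum.distrib sum_distrib_left)
    then show ?thesis
      using sum_minv_M_apply[OF inv, of j "\<lambda>_. 1"] by simp
  qed
  then have "rho_prod M s = (\<lambda>j. cis (2 * pi * (\<Sum>i\<in>UNIV. minv M j i * of_int (a i))))"
    by (simp add: rho_prod_def cis_2pi_add_int)
  then show ?thesis by (metis rangeI)
qed

lemma Aut_eq_range_rho_prod:
  assumes "invertible_poly M"
  shows "Aut M = range (rho_prod M)"
proof
  show "Aut M \<subseteq> range (rho_prod M)"
  proof
    fix g assume "g \<in> Aut M"
    then obtain a where "g = (\<lambda>j. cis (2 * pi * (\<Sum>i\<in>UNIV. minv M j i * of_int (a i))))"
      using exists_int_phases[OF assms] Aut_iff_mpow_rows[OF assms] by meson
    then show "g \<in> range (rho_prod M)"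
      using int_phases_in_range_rho_prod[OF assms] by simp
  qed
qed (use rho_prod_in_Aut[OF assms] in blast)

lemma rho_prod_eq_bounded_int_phases:
  assumes inv: "invertible_poly M"
  shows "\<exists>a. (\<forall>i. a i \<in> {0..int (\<Sum>j\<in>UNIV. M i j)})
           \<and> rho_prod M s = (\<lambda>j. cis (2 * pi * (\<Sum>i\<in>UNIV. minv M j i * of_int (a i))))"
proof -
  define \<theta> where "\<theta> j = (\<Sum>k\<in>UNIV. minv M j k * real (s k))" for j
  define a where "a i = int (s i) - (\<Sum>j\<in>UNIV. int (M i j) * \<lfloor>\<theta> j\<rfloor>)" for i
  have a: "of_int (a i) = (\<Sum>j\<in>UNIV. real (M i j) * (\<theta> j - of_int \<lfloor>\<theta> j\<rfloor>))" for i
    using sum_M_minv_apply[OF inv, of i "\<lambda>k. real (s k)"]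
    by (simp add: a_def \<theta>_def right_diff_distrib sum_subtractf)
  have frac: "\<theta> j - of_int \<lfloor>\<theta> j\<rfloor> = (\<Sum>i\<in>UNIV. minv M j i * of_int (a i))" for j
    by (rule minv_solve[OF inv]) (simp add: a)
  have "rho_prod M s j = cis (2 * pi * ((\<theta> j - of_int \<lfloor>\<theta> j\<rfloor>) + of_int \<lfloor>\<theta> j\<rfloor>))" for j
    by (simp add: rho_prod_def \<theta>_def)
  then have "rho_prod M s j = cis (2 * pi * (\<Sum>i\<in>UNIV. minv M j i * of_int (a i)))" for j
    by (simp only: cis_2pi_add_int frac)
  then have "rho_prod M s = (\<lambda>j. cis (2 * pi * (\<Sum>i\<in>UNIV. minv M j i * of_int (a i))))" ..
  moreover have "a i \<in> {0..int (\<Sum>j\<in>UNIV. M i j)}" for i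
  proof -
    have "0 \<le> \<theta> j - of_int \<lfloor>\<theta> j\<rfloor>" "\<theta> j - of_int \<lfloor>\<theta> j\<rfloor> \<le> 1" for j
      by linarith+
    then have "0 \<le> real_of_int (a i)" "real_of_int (a i) \<le> (\<Sum>j\<in>UNIV. real (M i j))"
      unfolding a by (auto intro!: sum_nonneg sum_mono simp: mult_left_le)
    then show ?thesis using of_int_le_iff[where 'a = real, of "a i" "int (\<Sum>j\<in>UNIV. M i j)"] by simp
  qed
  ultimately show ?thesis by blast
qed

lemma finite_Aut:
  assumes inv: "invertible_poly M"
  shows "finite (Aut M)"
proof -
  define F where "F = Pi\<^sub>E UNIV (\<lambda>i. {0..int (\<Sum>j\<in>UNIV. M i j)})"
  have "Aut M \<subseteq> (\<lambda>a j. cis (2 * pi * (\<Sum>i\<in>UNIV. minv M j i * of_int (a i)))) ` F"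
    using rho_prod_eq_bounded_int_phases[OF inv]
    by (fastforce simp: Aut_eq_range_rho_prod[OF inv] F_def PiE_UNIV_domain)
  moreover have "finite F" unfolding F_def by (intro finite_PiE) auto
  ultimately show ?thesis by (meson finite_surj)
qed

lemma is_subgroup_Aut:
  assumes inv: "invertible_poly M"
  shows "is_subgroup (Aut M)"
  using Aut_iff_mpow_rows[OF inv] unfolding is_subgroup_def
  by (auto simp: mpow_vmul[unfolded vmul_def] mpow_inverse)

lemma is_subgroup_SL:
  assumes inv: "invertible_poly M"
  shows "is_subgroup (SL M)"
proof -
  have prod_inverse: "(\<Prod>j\<in>UNIV. inverse (a j)) = inverse (\<Prod>j\<in>UNIV. a j)"
    for a :: "'n \<Rightarrow> complex"
    using prod_inversef[of a UNIV] by (simp add: o_def)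
  show ?thesis
    using is_subgroup_Aut[OF inv] unfolding is_subgroup_def SL_def
    by (auto simp: prod.distrib prod_inverse)
qed

lemma SL_eq: "SL M = {g \<in> Aut M. diag_det g = 1}"
  by (simp add: SL_def diag_det_def)

lemma SL_subset_Aut: "SL M \<subseteq> Aut M"
  by (simp add: SL_def)

section \<open>\<open>J\<^sub>W\<close> and the pairing with the transposed polynomial\<close>

lemma rho_prod_add: "rho_prod M (\<lambda>k. r k + r' k) = vmul (rho_prod M r) (rho_prod M r')"
  by (simp add: rho_prod_def vmul_def cis_mult sum.distrib distrib_left)

lemma rho_prod_zero [simp]: "rho_prod M (\<lambda>_. 0) = (\<lambda>_. 1)"
  by (simp add: rho_prod_def)

lemma sq_rho_prod: "sq (rho_prod M s) = rho_prod M (\<lambda>k. s k + s k)"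
  by (simp add: rho_prod_add sq_def vmul_def power2_eq_square)

text \<open>Both sides equal \<open>exp (2\<pi>i r^T M^{-1} s)\<close>: the pairing behind Berglund--Huebsch
  duality.\<close>
lemma mpow_rho_prod_Mtr:
  assumes inv: "invertible_poly M"
  shows "mpow (rho_prod M s) r = mpow (rho_prod (Mtr M) r) s"
proof -
  have "(\<Sum>j\<in>UNIV. real (r j) * (\<Sum>k\<in>UNIV. minv M j k * real (s k)))
      = (\<Sum>j\<in>UNIV. \<Sum>k\<in>UNIV. real (s k) * (minv M j k * real (r j)))"
    by (simp add: sum_distrib_left mult_ac)
  also have "\<dots> = (\<Sum>k\<in>UNIV. real (s k) * (\<Sum>j\<in>UNIV. minv (Mtr M) k j * real (r j)))"
    by (subst sum.swap) (simp add: minv_Mtr[OF inv] sum_distrib_left)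
  finally show ?thesis by (simp add: mpow_rho_prod)
qed

lemma qweight_eq:
  assumes inv: "invertible_poly M"
  shows "qweight M j = (\<Sum>k\<in>UNIV. minv M j k)"
proof -
  have "qweight M = (\<lambda>j. \<Sum>k\<in>UNIV. minv M j k)"
    unfolding qweight_def
  proof (rule the_equality)
    show "\<forall>i. (\<Sum>j\<in>UNIV. real (M i j) * (\<Sum>k\<in>UNIV. minv M j k)) = 1"
      using sum_M_minv_apply[OF inv, of _ "\<lambda>_. 1"] by simp
    show "q = (\<lambda>j. \<Sum>k\<in>UNIV. minv M j k)" if "\<forall>i. (\<Sum>j\<in>UNIV. real (M i j) * q j) = 1" for q
      using minv_solve[OF inv, of q "\<lambda>_. 1"] that by auto
  qed
  then show ?thesis by simp
qed

lemma Jgrad_eq_rho_prod: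
  assumes inv: "invertible_poly M"
  shows "Jgrad M = rho_prod M (\<lambda>_. 1)"
  by (simp add: Jgrad_def rho_prod_def qweight_eq[OF inv])

lemma Jgrad_in_Aut: "invertible_poly M \<Longrightarrow> Jgrad M \<in> Aut M"
  by (simp add: Jgrad_eq_rho_prod rho_prod_in_Aut)

lemma diag_det_Jgrad: "diag_det (Jgrad M) = cis (2 * pi * (\<Sum>j\<in>UNIV. qweight M j))"
  by (simp add: diag_det_def Jgrad_def prod_cis sum_distrib_left)

lemma sum_qweight_Mtr:
  assumes inv: "invertible_poly M"
  shows "(\<Sum>j\<in>UNIV. qweight (Mtr M) j) = (\<Sum>j\<in>UNIV. qweight M j)"
  using sum.swap[of "\<lambda>j k. minv M k j" UNIV UNIV]
  by (simp add: qweight_eq inv invertible_Mtr minv_Mtr)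

lemma diag_det_rho_prod:
  assumes inv: "invertible_poly M"
  shows "diag_det (rho_prod M s) = mpow (Jgrad (Mtr M)) s"
proof -
  have "diag_det (rho_prod M s) = mpow (rho_prod M s) (\<lambda>_. 1)"
    by (rule mpow_const_one[symmetric])
  also have "\<dots> = mpow (rho_prod (Mtr M) (\<lambda>_. 1)) s"
    by (rule mpow_rho_prod_Mtr[OF inv])
  finally show ?thesis
    by (simp add: Jgrad_eq_rho_prod[OF invertible_Mtr[OF inv]])
qed

section \<open>Finite groups of diagonal matrices are determined by their invariant monomials\<close>

definition inv_exps :: "('n::finite \<Rightarrow> complex) set \<Rightarrow> ('n \<Rightarrow> nat) set" where
  "inv_exps S = {r. \<forall>h\<in>S. mpow h r = 1}"

lemma genby_least: "is_subgroup H \<Longrightarrow> S \<subseteq> H \<Longrightarrow> genby S \<subseteq> H"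
  unfolding genby_def by blast

lemma subset_genby: "S \<subseteq> genby S"
  unfolding genby_def by blast

lemma is_subgroup_genby: "is_subgroup (genby S)"
  unfolding genby_def is_subgroup_def by blast

lemma is_subgroup_mpow_eq_1: "is_subgroup {h. mpow h r = 1}"
  unfolding is_subgroup_def by (simp add: mpow_vmul[unfolded vmul_def] mpow_inverse)

lemma inv_exps_genby: "inv_exps (genby S) = inv_exps S"
proof
  show "inv_exps (genby S) \<subseteq> inv_exps S"
    using subset_genby unfolding inv_exps_def by blast
  show "inv_exps S \<subseteq> inv_exps (genby S)"
    using genby_least[OF is_subgroup_mpow_eq_1] unfolding inv_exps_def by blast
qed

type_synonym 'n terms = "(complex \<times> ('n \<Rightarrow> nat)) list"

definition terms_eval :: "'n::finite terms \<Rightarrow> ('n \<Rightarrow> complex) \<Rightarrow> complex" where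
  "terms_eval ts x = (\<Sum>(c, e)\<leftarrow>ts. c * mpow x e)"

definition terms_mult :: "'n::finite terms \<Rightarrow> 'n terms \<Rightarrow> 'n terms" where
  "terms_mult ts us = concat (map (\<lambda>(c, e). map (\<lambda>(d, f). (c * d, \<lambda>k. e k + f k)) us) ts)"

definition polyfun :: "(('n::finite \<Rightarrow> complex) \<Rightarrow> complex) \<Rightarrow> bool" where
  "polyfun p \<longleftrightarrow> (\<exists>ts. \<forall>x. p x = terms_eval ts x)"

lemma terms_eval_Nil [simp]: "terms_eval [] x = 0"
  by (simp add: terms_eval_def)

lemma terms_eval_Cons [simp]: "terms_eval ((c, e) # ts) x = c * mpow x e + terms_eval ts x"
  by (simp add: terms_eval_def)

lemma terms_eval_mult: "terms_eval (terms_mult ts us) x = terms_eval ts x * terms_eval us x"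
proof (induction ts)
  case (Cons t ts)
  obtain c e where t: "t = (c, e)" by fastforce
  have "terms_eval (map (\<lambda>(d, f). (c * d, \<lambda>k. e k + f k)) us) x = c * mpow x e * terms_eval us x"
    by (induction us) (auto simp: mpow_add algebra_simps)
  with Cons show ?case
    by (simp add: t terms_mult_def terms_eval_def distrib_right)
qed (simp add: terms_mult_def)

lemma polyfun_const: "polyfun (\<lambda>x. c)"
  unfolding polyfun_def by (rule exI[of _ "[(c, \<lambda>_. 0)]"]) simp

lemma polyfun_affine: "polyfun (\<lambda>x. (x j - a) * b)"
  unfolding polyfun_def
  by (rule exI[of _ "[(b, \<lambda>k. if k = j then 1 else 0), (- (a * b), \<lambda>_. 0)]"])
    (simp add: mpow_unit_vector algebra_simps)

lemma polyfun_mult: "polyfun p \<Longrightarrow> polyfun q \<Longrightarrow> polyfun (\<lambda>x. p x * q x)"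
  unfolding polyfun_def by (metis terms_eval_mult)

lemma polyfun_prod:
  "finite S \<Longrightarrow> (\<And>s. s \<in> S \<Longrightarrow> polyfun (p s)) \<Longrightarrow> polyfun (\<lambda>x. \<Prod>s\<in>S. p s x)"
  by (induction S rule: finite_induct) (simp_all add: polyfun_const polyfun_mult)

text \<open>Averaging a polynomial over \<open>K\<close> only sees its \<open>K\<close>-invariant monomials, on which
  \<open>g\<close> acts trivially by hypothesis.\<close>
lemma sum_terms_eval_translate:
  assumes finK: "finite K" and K: "is_subgroup K" and nzK: "\<forall>h\<in>K. \<forall>j. h j \<noteq> 0"
    and g: "inv_exps K \<subseteq> inv_exps {g}"
  shows "(\<Sum>h\<in>K. terms_eval ts (vmul g h)) = (\<Sum>h\<in>K. terms_eval ts h)"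
proof (induction ts)
  case (Cons t ts)
  obtain c e where t: "t = (c, e)" by fastforce
  have "(\<Sum>h\<in>K. mpow (vmul g h) e) = (\<Sum>h\<in>K. mpow h e)"
  proof (cases "e \<in> inv_exps K")
    case True
    then have "mpow g e = 1" using g by (auto simp: inv_exps_def)
    then show ?thesis by (simp add: mpow_vmul)
  next
    case False
    then obtain h0 where h0: "h0 \<in> K" "mpow h0 e \<noteq> 1" by (auto simp: inv_exps_def)
    have "\<forall>h\<in>K. vmul h0 h \<in> K" using K h0(1) by (simp add: is_subgroup_def vmul_def)
    then have "(\<Sum>h\<in>K. mpow h e) = 0"
      using h0 nzK finK by (intro sum_mpow_eq_0) auto
    then show ?thesis by (simp add: mpow_vmul flip: sum_distrib_left)
  qed
  with Cons show ?case by (simp add: t sum.distrib flip: sum_distrib_left)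
qed simp

text \<open>If \<open>g \<notin> K\<close>, the interpolating polynomial that is \<open>1\<close> at the identity and vanishes on
  \<open>K \<union> gK\<close> elsewhere has average \<open>1\<close> over \<open>K\<close> but average \<open>0\<close> over \<open>gK\<close>.\<close>
lemma mem_subgroup_if_inv_exps_subset:
  fixes K :: "('n::finite \<Rightarrow> complex) set"
  assumes finK: "finite K" and K: "is_subgroup K" and nzK: "\<forall>h\<in>K. \<forall>j. h j \<noteq> 0"
    and g: "inv_exps K \<subseteq> inv_exps {g}"
  shows "g \<in> K"
proof (rule ccontr)
  assume gK: "g \<notin> K"
  define one where "one = (\<lambda>_::'n. 1::complex)"
  have oneK: "one \<in> K" using K by (simp add: is_subgroup_def one_def)
  define S where "S = (K \<union> vmul g ` K) - {one}"
  have finS: "finite S" using finK by (simp add: S_def)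
  have "\<forall>p\<in>S. \<exists>j. p j \<noteq> 1" unfolding S_def one_def by (auto simp: fun_eq_iff)
  then obtain jp where jp: "\<forall>p\<in>S. p (jp p) \<noteq> 1" by metis
  define f where "f x = (\<Prod>p\<in>S. (x (jp p) - p (jp p)) * inverse (1 - p (jp p)))" for x
  have "polyfun f" unfolding f_def by (intro polyfun_prod finS polyfun_affine)
  then obtain ts where ts: "\<And>x. f x = terms_eval ts x" unfolding polyfun_def by blast
  have f_one: "f one = 1" unfolding f_def one_def
    using jp by (intro prod.neutral) simp
  have f_S: "f p = 0" if "p \<in> S" for p
    unfolding f_def using finS that by (auto simp: prod_zero_iff)
  have "(\<Sum>h\<in>K. f h) = (\<Sum>h\<in>K. if h = one then 1 else 0)"
    using f_one f_S by (intro sum.cong) (auto simp: S_def)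
  also have "\<dots> = 1" using oneK finK by simp
  finally have avg_K: "(\<Sum>h\<in>K. f h) = 1" .
  have "vmul g h \<noteq> one" if "h \<in> K" for h
  proof
    assume "vmul g h = one"
    then have "g = (\<lambda>j. inverse (h j))"
      using nzK that by (auto simp: vmul_def one_def fun_eq_iff field_simps)
    then show False using gK K that by (simp add: is_subgroup_def)
  qed
  then have "(\<Sum>h\<in>K. f (vmul g h)) = 0"
    using f_S by (intro sum.neutral) (auto simp: S_def)
  moreover have "(\<Sum>h\<in>K. f (vmul g h)) = (\<Sum>h\<in>K. f h)"
    unfolding ts by (rule sum_terms_eval_translate[OF finK K nzK g])
  ultimately show False using avg_K by simp
qed

section \<open>The dual group\<close>

lemma rho_prod_column_combination:
  assumes inv: "invertible_poly M"
  shows "rho_prod M (\<lambda>k. \<Sum>l\<in>UNIV. M k l * t l) = (\<lambda>_. 1)"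
  using sum_minv_M_apply[OF inv, of _ "\<lambda>l. real (t l)"] by (simp add: rho_prod_def)

lemma mpow_row_combination:
  assumes inv: "invertible_poly M" and h: "h \<in> Aut M"
  shows "mpow h (\<lambda>k. \<Sum>i\<in>UNIV. M i k * t i) = 1"
proof -
  have "mpow h (\<lambda>k. \<Sum>i\<in>UNIV. M i k * t i) = (\<Prod>k\<in>UNIV. \<Prod>i\<in>UNIV. (h k ^ M i k) ^ t i)"
    by (simp add: mpow_def power_sum power_mult)
  also have "\<dots> = (\<Prod>i\<in>UNIV. mpow h (M i) ^ t i)"
    by (subst prod.swap) (simp add: mpow_def prod_power_distrib)
  also have "\<dots> = 1"
    using h by (simp add: Aut_iff_mpow_rows[OF inv])
  finally show ?thesis .
qed

lemma rhobar_prod: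
  assumes inv: "invertible_poly M"
  shows "(\<lambda>j. \<Prod>k\<in>UNIV. rhobar M k j ^ r k) = rho_prod (Mtr M) r"
  by (simp add: rhobar_def rho_prod_def Complex.DeMoivre prod_cis minv_Mtr[OF inv]
      sum_distrib_left mult_ac)

lemma BHdual_eq:
  assumes inv: "invertible_poly M"
  shows "BHdual M H = rho_prod (Mtr M) ` inv_exps H"
  unfolding BHdual_def inv_exps_def rhobar_prod[OF inv] mpow_def by blast

lemma star_eq:
  assumes inv: "invertible_poly M"
  shows "star M G = rho_prod (Mtr M) ` inv_exps (insert (Jgrad M) G)"
  unfolding star_def BHdual_eq[OF inv] inv_exps_genby ..

text \<open>The inverse is \<open>rho_prod (Mtr M) (c - r)\<close> for a multiple \<open>c \<ge> r\<close> of the column sums of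
  \<open>M\<close>, because the exponent vector \<open>c\<close> is trivial on both sides of the pairing.\<close>
lemma inverse_in_dual:
  assumes inv: "invertible_poly M" and TA: "T \<subseteq> Aut M" and r: "r \<in> inv_exps T"
  shows "(\<lambda>j. inverse (rho_prod (Mtr M) r j)) \<in> rho_prod (Mtr M) ` inv_exps T"
proof -
  define L where "L = (\<Sum>k\<in>UNIV. r k)"
  define c where "c k = (\<Sum>i\<in>UNIV. M i k * L)" for k
  define r' where "r' k = c k - r k" for k
  have "r k \<le> L" for k unfolding L_def by (rule member_le_sum) auto
  moreover have "L \<le> c k" for k
    using colsum_pos[OF inv, of k] by (simp add: c_def flip: sum_distrib_right)
  ultimately have c: "c = (\<lambda>k. r' k + r k)"
    unfolding r'_def by (metis le_add_diff_inverse2 order_trans)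
  have "mpow h r' = 1" if "h \<in> T" for h
  proof -
    have "mpow h r' * mpow h r = mpow h c"
      by (simp add: c mpow_add)
    also have "\<dots> = 1"
      unfolding c_def using mpow_row_combination[OF inv, of h "\<lambda>_. L"] that TA by auto
    finally show ?thesis using r that by (simp add: inv_exps_def)
  qed
  then have "r' \<in> inv_exps T" by (simp add: inv_exps_def)
  moreover have "rho_prod (Mtr M) r' = (\<lambda>j. inverse (rho_prod (Mtr M) r j))"
  proof -
    have "vmul (rho_prod (Mtr M) r') (rho_prod (Mtr M) r) = rho_prod (Mtr M) c"
      by (simp add: c rho_prod_add)
    also have "\<dots> = (\<lambda>_. 1)"
      using rho_prod_column_combination[OF invertible_Mtr[OF inv], of "\<lambda>_. L"]
      unfolding c_def by (simp add: Mtr_def)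
    finally show ?thesis unfolding vmul_def fun_eq_iff by (metis inverse_unique mult.commute)
  qed
  ultimately show ?thesis by (metis image_eqI)
qed

lemma is_subgroup_dual:
  assumes inv: "invertible_poly M" and TA: "T \<subseteq> Aut M"
  shows "is_subgroup (rho_prod (Mtr M) ` inv_exps T)"
  unfolding is_subgroup_def
proof (intro conjI ballI)
  show "(\<lambda>_. 1) \<in> rho_prod (Mtr M) ` inv_exps T"
    by (rule image_eqI[where x = "\<lambda>_. 0"]) (simp_all add: inv_exps_def)
next
  fix a b assume "a \<in> rho_prod (Mtr M) ` inv_exps T" "b \<in> rho_prod (Mtr M) ` inv_exps T"
  then obtain r r' where r: "r \<in> inv_exps T" "r' \<in> inv_exps T"
    and ab: "a = rho_prod (Mtr M) r" "b = rho_prod (Mtr M) r'"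
    by blast
  have rr': "(\<lambda>k. r k + r' k) \<in> inv_exps T" using r by (simp add: inv_exps_def mpow_add)
  show "(\<lambda>j. a j * b j) \<in> rho_prod (Mtr M) ` inv_exps T"
    unfolding ab by (rule image_eqI[OF _ rr']) (simp add: rho_prod_add vmul_def)
next
  fix a assume "a \<in> rho_prod (Mtr M) ` inv_exps T"
  then show "(\<lambda>j. inverse (a j)) \<in> rho_prod (Mtr M) ` inv_exps T"
    using inverse_in_dual[OF inv TA] by blast
qed

lemma is_subgroup_star:
  assumes inv: "invertible_poly M" and GA: "G \<subseteq> Aut M"
  shows "is_subgroup (star M G)"
  unfolding star_eq[OF inv] using GA Jgrad_in_Aut[OF inv] by (intro is_subgroup_dual[OF inv]) auto

text \<open>The determinant of \<open>rho_prod (Mtr M) r\<close> is the value of the monomial \<open>x^r\<close> at \<open>J\<^sub>W\<close>.\<close>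
lemma star_subset_SL:
  assumes inv: "invertible_poly M"
  shows "star M G \<subseteq> SL (Mtr M)"
proof
  fix x assume "x \<in> star M G"
  then obtain r where r: "r \<in> inv_exps (insert (Jgrad M) G)" and x: "x = rho_prod (Mtr M) r"
    unfolding star_eq[OF inv] by blast
  have "diag_det x = mpow (Jgrad M) r"
    using diag_det_rho_prod[OF invertible_Mtr[OF inv]] x by simp
  with r x show "x \<in> SL (Mtr M)"
    by (simp add: SL_eq inv_exps_def rho_prod_in_Aut invertible_Mtr[OF inv])
qed

lemma sq_Jgrad_Mtr_in_star:
  assumes inv: "invertible_poly M" and detJ: "diag_det (Jgrad M) = -1" and GSL: "G \<subseteq> SL M"
  shows "sq (Jgrad (Mtr M)) \<in> star M G"
proof -
  have "(\<lambda>_. 2) \<in> inv_exps (insert (Jgrad M) G)"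
    using detJ GSL by (auto simp: inv_exps_def mpow_const_two SL_eq)
  then have "rho_prod (Mtr M) (\<lambda>_. 2) \<in> star M G"
    unfolding star_eq[OF inv] by blast
  then show ?thesis
    by (simp add: Jgrad_eq_rho_prod[OF invertible_Mtr[OF inv]] sq_rho_prod numeral_2_eq_2)
qed

lemma is_subgroup_union_coset:
  assumes G: "is_subgroup G" and J2: "sq J \<in> G" and nz: "\<forall>j. J j \<noteq> 0"
  shows "is_subgroup (G \<union> vmul J ` G)"
proof -
  have mul: "vmul a b \<in> G" if "a \<in> G" "b \<in> G" for a b
    using G that by (simp add: is_subgroup_def vmul_def)
  have inv: "(\<lambda>j. inverse (a j)) \<in> G" if "a \<in> G" for a
    using G that by (simp add: is_subgroup_def)
  have JJ: "vmul J J \<in> G" using J2 by (simp add: sq_def vmul_def power2_eq_square)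
  have "vmul a b \<in> G \<union> vmul J ` G"
    if a: "a \<in> G \<union> vmul J ` G" and b: "b \<in> G \<union> vmul J ` G" for a b
  proof -
    consider "a \<in> G" "b \<in> G"
      | g where "a \<in> G" "g \<in> G" "b = vmul J g"
      | g where "g \<in> G" "a = vmul J g" "b \<in> G"
      | g g' where "g \<in> G" "g' \<in> G" "a = vmul J g" "b = vmul J g'"
      using a b by blast
    then show ?thesis
    proof cases
      case 1
      then show ?thesis using mul by blast
    next
      case (2 g)
      then have "vmul a b = vmul J (vmul a g)" by (simp add: vmul_def fun_eq_iff ac_simps)
      then show ?thesis using mul 2 by blast
    next
      case (3 g)
      then have "vmul a b = vmul J (vmul g b)" by (simp add: vmul_def fun_eq_iff ac_simps)
      then show ?thesis using mul 3 by blast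
    next
      case (4 g g')
      then have "vmul a b = vmul (vmul J J) (vmul g g')" by (simp add: vmul_def fun_eq_iff ac_simps)
      then show ?thesis using mul JJ 4 by simp
    qed
  qed
  moreover have "(\<lambda>j. inverse (a j)) \<in> G \<union> vmul J ` G" if a: "a \<in> G \<union> vmul J ` G" for a
  proof (cases "a \<in> G")
    case False
    then obtain g where g: "g \<in> G" "a = vmul J g" using a by blast
    have "(\<lambda>j. inverse (a j)) = vmul J (vmul (\<lambda>j. inverse (vmul J J j)) (\<lambda>j. inverse (g j)))"
      using nz by (simp add: g vmul_def fun_eq_iff field_simps)
    then show ?thesis using mul[OF inv[OF JJ] inv[OF g(1)]] by blast
  qed (use inv in blast)
  moreover have "(\<lambda>_. 1) \<in> G" using G by (simp add: is_subgroup_def)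
  ultimately show ?thesis
    unfolding is_subgroup_def by (auto simp: vmul_def)
qed

text \<open>\<open>G[J\<^sub>W] = G \<union> J\<^sub>W G\<close>, and the coset \<open>J\<^sub>W G\<close> has determinant \<open>-1\<close>.\<close>
lemma genby_insert_inter_SL:
  assumes G: "is_subgroup G" and J2: "sq J \<in> G" and nz: "\<forall>j. J j \<noteq> 0"
    and detJ: "diag_det J = -1" and GSL: "G \<subseteq> SL M"
  shows "genby (insert J G) \<inter> SL M \<subseteq> G"
proof -
  have "vmul J (\<lambda>_. 1) = J" by (simp add: vmul_def)
  moreover have "(\<lambda>_. 1) \<in> G" using G by (simp add: is_subgroup_def)
  ultimately have "insert J G \<subseteq> G \<union> vmul J ` G" by (metis image_eqI insert_subset sup_ge1 UnI2)
  then have "genby (insert J G) \<subseteq> G \<union> vmul J ` G"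
    by (rule genby_least[OF is_subgroup_union_coset[OF G J2 nz]])
  moreover have "vmul J g \<notin> SL M" if "g \<in> G" for g
    using that GSL detJ by (auto simp: SL_eq diag_det_vmul)
  ultimately show ?thesis by blast
qed

lemma subset_star_star:
  assumes inv: "invertible_poly M" and GSL: "G \<subseteq> SL M"
  shows "G \<subseteq> star (Mtr M) (star M G)"
proof
  fix g assume g: "g \<in> G"
  then obtain s where s: "g = rho_prod M s"
    using GSL by (auto simp: SL_eq Aut_eq_range_rho_prod[OF inv])
  have "mpow h s = 1" if "h \<in> insert (Jgrad (Mtr M)) (star M G)" for h
    using that
  proof
    assume "h = Jgrad (Mtr M)"
    then show ?thesis using g GSL s diag_det_rho_prod[OF inv, of s] by (auto simp: SL_eq)
  next
    assume "h \<in> star M G"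
    then obtain r where "r \<in> inv_exps (insert (Jgrad M) G)" "h = rho_prod (Mtr M) r"
      unfolding star_eq[OF inv] by blast
    then show ?thesis
      using g s mpow_rho_prod_Mtr[OF inv, of s r] by (simp add: inv_exps_def)
  qed
  then show "g \<in> star (Mtr M) (star M G)"
    unfolding star_eq[OF invertible_Mtr[OF inv]] s by (simp add: inv_exps_def)
qed

lemma star_star_subset:
  assumes inv: "invertible_poly M" and detJ: "diag_det (Jgrad M) = -1"
    and G: "is_subgroup G" and J2: "sq (Jgrad M) \<in> G" and GSL: "G \<subseteq> SL M"
  shows "star (Mtr M) (star M G) \<subseteq> G"
proof
  define K where "K = genby (insert (Jgrad M) G)"
  have KA: "K \<subseteq> Aut M"
    unfolding K_def using GSL Jgrad_in_Aut[OF inv]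
    by (intro genby_least[OF is_subgroup_Aut[OF inv]]) (auto simp: SL_eq)
  have nzK: "\<forall>h\<in>K. \<forall>j. h j \<noteq> 0" using KA by (auto simp: Aut_iff_mpow_rows[OF inv])
  have finK: "finite K" using finite_Aut[OF inv] KA by (rule finite_subset[rotated])
  have subK: "is_subgroup K" unfolding K_def by (rule is_subgroup_genby)
  fix y assume "y \<in> star (Mtr M) (star M G)"
  then obtain s where s: "s \<in> inv_exps (insert (Jgrad (Mtr M)) (star M G))" and y: "y = rho_prod M s"
    unfolding star_eq[OF invertible_Mtr[OF inv]] by auto
  have "y \<in> SL M"
    using s y diag_det_rho_prod[OF inv, of s] rho_prod_in_Aut[OF inv]
    by (simp add: SL_eq inv_exps_def)
  moreover have "inv_exps K \<subseteq> inv_exps {y}"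
  proof
    fix r assume "r \<in> inv_exps K"
    then have "rho_prod (Mtr M) r \<in> star M G"
      unfolding star_eq[OF inv] K_def inv_exps_genby by blast
    then show "r \<in> inv_exps {y}"
      using s y mpow_rho_prod_Mtr[OF inv, of s r] by (simp add: inv_exps_def)
  qed
  then have "y \<in> K" by (rule mem_subgroup_if_inv_exps_subset[OF finK subK nzK])
  ultimately show "y \<in> G"
    using genby_insert_inter_SL[OF G J2 _ detJ GSL] Jgrad_in_Aut[OF inv]
    by (auto simp: K_def Aut_iff_mpow_rows[OF inv])
qed

lemma star_star:
  assumes inv: "invertible_poly M" and detJ: "diag_det (Jgrad M) = -1"
    and G: "is_subgroup G" and J2: "sq (Jgrad M) \<in> G" and GSL: "G \<subseteq> SL M"
  shows "star (Mtr M) (star M G) = G"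
  using star_star_subset[OF assms] subset_star_star[OF inv GSL] by blast

lemma star_genby_sq_Jgrad:
  assumes inv: "invertible_poly M"
  shows "star M (genby {sq (Jgrad M)}) = SL (Mtr M)"
proof
  show "SL (Mtr M) \<subseteq> star M (genby {sq (Jgrad M)})"
  proof
    fix x assume x: "x \<in> SL (Mtr M)"
    then obtain r where r: "x = rho_prod (Mtr M) r"
      by (auto simp: SL_eq Aut_eq_range_rho_prod[OF invertible_Mtr[OF inv]])
    have "mpow (Jgrad M) r = 1"
      using x r diag_det_rho_prod[OF invertible_Mtr[OF inv], of r] by (simp add: SL_eq)
    then have "r \<in> inv_exps (insert (Jgrad M) (genby {sq (Jgrad M)}))"
      using inv_exps_genby[of "{sq (Jgrad M)}"] by (auto simp: inv_exps_def mpow_sq)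
    then show "x \<in> star M (genby {sq (Jgrad M)})"
      unfolding star_eq[OF inv] r by blast
  qed
qed (rule star_subset_SL[OF inv])

lemma star_antimono: "H1 \<subseteq> H2 \<Longrightarrow> star M H2 \<subseteq> star M H1"
proof -
  assume "H1 \<subseteq> H2"
  then have "genby (insert (Jgrad M) H1) \<subseteq> genby (insert (Jgrad M) H2)"
    unfolding genby_def by blast
  then show ?thesis
    unfolding star_def BHdual_def by blast
qed

lemma star_SL:
  assumes inv: "invertible_poly M"
    and detJ: "diag_det (Jgrad M) = -1" and detJN: "diag_det (Jgrad (Mtr M)) = -1"
  shows "star M (SL M) = genby {sq (Jgrad (Mtr M))}"
proof -
  have invN: "invertible_poly (Mtr M)" by (rule invertible_Mtr[OF inv])
  have "sq (Jgrad (Mtr M)) \<in> SL (Mtr M)"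
    using sq_Jgrad_Mtr_in_star[OF inv detJ, of "SL M"] star_subset_SL[OF inv] by blast
  then have "genby {sq (Jgrad (Mtr M))} \<subseteq> SL (Mtr M)"
    by (intro genby_least[OF is_subgroup_SL[OF invN]]) auto
  then have "star M (star (Mtr M) (genby {sq (Jgrad (Mtr M))})) = genby {sq (Jgrad (Mtr M))}"
    using star_star[OF invN detJN is_subgroup_genby] subset_genby by auto
  then show ?thesis
    using star_genby_sq_Jgrad[OF invN] by simp
qed

section \<open>The Calabi--Yau condition\<close>

lemma sum_qweight_eq_half:
  assumes inv: "invertible_poly M" and qh: "quasi_hom M w d" and cy: "2 * (\<Sum>j\<in>UNIV. w j) = d"
  shows "(\<Sum>j\<in>UNIV. qweight M j) = 1 / 2"
proof -
  have d: "real d > 0" using qh by (simp add: quasi_hom_def)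
  have "(\<Sum>j\<in>UNIV. real (M i j) * (real (w j) / real d)) = 1" for i
  proof -
    have "real (\<Sum>j\<in>UNIV. M i j * w j) = real d" using qh by (simp add: quasi_hom_def)
    then show ?thesis using d by (simp add: times_divide_eq_right flip: sum_divide_distrib)
  qed
  then have "qweight M j = real (w j) / real d" for j
    using minv_solve[OF inv, of "\<lambda>j. real (w j) / real d" "\<lambda>_. 1"] by (simp add: qweight_eq[OF inv])
  then have "(\<Sum>j\<in>UNIV. qweight M j) = (\<Sum>j\<in>UNIV. real (w j)) / real d"
    by (simp add: sum_divide_distrib)
  also have "(\<Sum>j\<in>UNIV. real (w j)) = real d / 2"
    using arg_cong[OF cy, of real] by simp
  finally show ?thesis using d by simp
qed

lemma diag_det_Jgrad_eq_minus_one: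
  assumes "(\<Sum>j\<in>UNIV. qweight M j) = 1 / 2"
  shows "diag_det (Jgrad M) = -1"
proof -
  have angle: "2 * pi * (\<Sum>j\<in>UNIV. qweight M j) = pi" using assms by simp
  show ?thesis by (simp only: diag_det_Jgrad angle cis_pi)
qed

theorem proposition4p3:
  fixes M :: "'n::finite \<Rightarrow> 'n \<Rightarrow> nat" and w :: "'n \<Rightarrow> nat" and d :: nat
  assumes inv: "invertible_poly M"
    and qh: "quasi_hom M w d"
    and nd: "nondegenerate M"
    and cy: "2 * (\<Sum>j\<in>UNIV. w j) = d"
  shows "(\<forall>G. is_subgroup G \<and> sq (Jgrad M) \<in> G \<and> G \<subseteq> SL M \<longrightarrow>
            is_subgroup (star M G) \<and> sq (Jgrad (Mtr M)) \<in> star M G \<and> star M G \<subseteq> SL (Mtr M)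
            \<and> star (Mtr M) (star M G) = G)
       \<and> star M (genby {sq (Jgrad M)}) = SL (Mtr M)
       \<and> star M (SL M) = genby {sq (Jgrad (Mtr M))}
       \<and> (\<forall>H1 H2. is_subgroup H1 \<and> is_subgroup H2 \<and> H1 \<subseteq> H2
            \<and> sq (Jgrad M) \<in> H1 \<and> H1 \<subseteq> SL M \<and> sq (Jgrad M) \<in> H2 \<and> H2 \<subseteq> SL M
            \<longrightarrow> star M H2 \<subseteq> star M H1)"
proof -
  have half: "(\<Sum>j\<in>UNIV. qweight M j) = 1 / 2" by (rule sum_qweight_eq_half[OF inv qh cy])
  have detJ: "diag_det (Jgrad M) = -1" by (rule diag_det_Jgrad_eq_minus_one[OF half])
  have detJN: "diag_det (Jgrad (Mtr M)) = -1"
    using half sum_qweight_Mtr[OF inv] by (intro diag_det_Jgrad_eq_minus_one) simp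
  have dual: "\<forall>G. is_subgroup G \<and> sq (Jgrad M) \<in> G \<and> G \<subseteq> SL M \<longrightarrow>
            is_subgroup (star M G) \<and> sq (Jgrad (Mtr M)) \<in> star M G \<and> star M G \<subseteq> SL (Mtr M)
            \<and> star (Mtr M) (star M G) = G"
  proof (intro allI impI, elim conjE)
    fix G assume G: "is_subgroup G" "sq (Jgrad M) \<in> G" "G \<subseteq> SL M"
    show "is_subgroup (star M G) \<and> sq (Jgrad (Mtr M)) \<in> star M G
        \<and> star M G \<subseteq> SL (Mtr M) \<and> star (Mtr M) (star M G) = G"
      using is_subgroup_star[OF inv order_trans[OF G(3) SL_subset_Aut]]
        sq_Jgrad_Mtr_in_star[OF inv detJ G(3)] star_subset_SL[OF inv] star_star[OF inv detJ G]
      by blast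
  qed
  have antimono: "\<forall>H1 H2. is_subgroup H1 \<and> is_subgroup H2 \<and> H1 \<subseteq> H2
            \<and> sq (Jgrad M) \<in> H1 \<and> H1 \<subseteq> SL M \<and> sq (Jgrad M) \<in> H2 \<and> H2 \<subseteq> SL M
            \<longrightarrow> star M H2 \<subseteq> star M H1"
    using star_antimono by blast
  show ?thesis
    using dual star_genby_sq_Jgrad[OF inv] star_SL[OF inv detJ detJN] antimono
    by (intro conjI)
qed

end
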